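(* Let $\mathbb{K}$ be a field of characteristic zero, let $u,v,t,w\in\mathbb{K}$ with $wt\neq0$, let $a_1,\dots,a_\ell\in\mathbb{K}$, and let $\alpha_1\le\dots\le\alpha_\ell$, $\beta_1,\dots,\beta_\ell$, $\gamma_1,\dots,\gamma_\ell$ be nonnegative integers. Let \[P=\sum_{j=1}^\ell a_jX^{\alpha_j}(vX+t)^{\beta_j}(uX+w)^{\gamma_j}.\] If $P\neq0$, then $\operatorname{val}(P)\le\max_{1\le j\le\ell}\left(\alpha_j+2\binom{\ell+1-j}{2}\right)$.
   Context: For a nonzero polynomial $P$, $\operatorname{val}(P)$ is the largest integer $v$ such that $X^v$ divides $P$. *)

theory Defs
  imports "HOL-Computational_Algebra.Polynomial"
begin

definition val :: "'a::comm_semiring_1 poly \<Rightarrow> nat" where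
  "val P = (GREATEST v. [:0, 1:] ^ v dvd P)"

end

theory Submission
  imports "Jordan_Normal_Form.Determinant" Defs
begin

(* Write P = \<Sum> a_j f_j with f_j = X^\<alpha>_j A^\<beta>_j B^\<gamma>_j, A = vX + t, B = uX + w, and let
   D = A B X d/dX. Then D^s f_j = f_j Q_js with deg Q_js \<le> 2s, so the Wronskian det (D^s f_j)
   of k terms equals det (Q_js) \<Prod> f_j and has valuation at most \<Sum> \<alpha>_j + 2 (k choose 2).
   If the f_j are linearly independent and a_1 \<noteq> 0, Gaussian elimination from the last row
   upwards gives a triangular basis g_1, ..., g_k of their span with pairwise distinct
   valuations, val g_1 \<ge> val P and val g_i \<ge> \<alpha>_i for i > 1. For distinct valuations the lowest
   coefficient of the Wronskian is a nonzero Vandermonde determinant, so its valuation is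
   \<Sum> val g_i; comparing both bounds gives val P \<le> \<alpha>_1 + 2 (k choose 2). Otherwise one term
   can be removed from the sum, and induction on the number of terms finishes the proof. *)

lemma X_pow_eq_monom: "[:0, 1:] ^ n = (monom 1 n :: 'a::comm_semiring_1 poly)"
  by (simp add: monom_altdef)

lemma X_pow_dvd_iff_coeff:
  "[:0, 1:] ^ n dvd (p :: 'a::comm_semiring_1 poly) \<longleftrightarrow> (\<forall>k<n. coeff p k = 0)"
  by (simp add: X_pow_eq_monom monom_1_dvd_iff')

lemma coeff_X_pow_mult: "coeff ([:0, 1:] ^ e * r) e = coeff (r :: 'a::comm_semiring_1 poly) 0"
  by (simp add: X_pow_eq_monom coeff_monom_mult)

lemma X_pow_Suc_dvdI:
  "[:0, 1:] ^ e dvd p \<Longrightarrow> coeff p e = 0 \<Longrightarrow> [:0, 1:] ^ Suc e dvd (p :: 'a::comm_semiring_1 poly)"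
  by (simp only: X_pow_dvd_iff_coeff) (auto simp: less_Suc_eq)

lemma X_pow_Suc_dvd_diff_smult:
  fixes p q :: "'a::field poly"
  assumes "[:0, 1:] ^ e dvd p" "[:0, 1:] ^ e dvd q" "coeff q e \<noteq> 0"
  shows "[:0, 1:] ^ Suc e dvd p - smult (coeff p e / coeff q e) q"
  using assms by (intro X_pow_Suc_dvdI) (simp_all add: dvd_diff dvd_smult)

lemma coeff_order_0_nonzero:
  fixes p :: "'a::idom poly"
  assumes "p \<noteq> 0"
  shows "coeff p (order 0 p) \<noteq> 0"
proof
  assume "coeff p (order 0 p) = 0"
  with order_1[of 0 p] have "[:0, 1:] ^ Suc (order 0 p) dvd p"
    by (intro X_pow_Suc_dvdI) simp_all
  with order_2[OF assms, of 0] show False by simp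
qed

lemma val_eq_order: "P \<noteq> 0 \<Longrightarrow> val P = order 0 (P :: 'a::idom poly)"
  unfolding val_def
proof (rule Greatest_equality)
  show "[:0, 1:] ^ order 0 P dvd P" using order_1[of 0 P] by simp
  show "n \<le> order 0 P" if "P \<noteq> 0" "[:0, 1:] ^ n dvd P" for n
    using that order_divides[of 0 n P] by simp
qed

lemma order_prod:
  "(\<And>i. i \<in> S \<Longrightarrow> f i \<noteq> 0) \<Longrightarrow> order a (\<Prod>i\<in>S. f i) = (\<Sum>i\<in>S. order a (f i :: 'b::idom poly))"
  by (induction S rule: infinite_finite_induct) (simp_all add: order_mult)

lemma coeff_mult_X_pow_dvd:
  fixes p q :: "'a::comm_semiring_1 poly"
  assumes "[:0, 1:] ^ m dvd p" "[:0, 1:] ^ n dvd q"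
  shows "coeff (p * q) (m + n) = coeff p m * coeff q n"
proof -
  obtain p' q' where p: "p = [:0, 1:] ^ m * p'" and q: "q = [:0, 1:] ^ n * q'"
    using assms by (auto elim!: dvdE)
  have "p * q = [:0, 1:] ^ (m + n) * (p' * q')"
    unfolding p q by (simp add: power_add algebra_simps)
  then show ?thesis by (simp add: coeff_X_pow_mult coeff_mult_0 p q)
qed

lemma X_pow_sum_dvd_prod:
  "(\<And>i. i \<in> S \<Longrightarrow> [:0, 1:] ^ n i dvd f i) \<Longrightarrow>
    [:0, 1:] ^ (\<Sum>i\<in>S. n i) dvd (\<Prod>i\<in>S. f i :: 'a::comm_semiring_1 poly)"
  unfolding power_sum by (rule prod_dvd_prod)

lemma coeff_prod_X_pow_dvd:
  fixes f :: "'b \<Rightarrow> 'a::comm_semiring_1 poly"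
  assumes "\<And>i. i \<in> S \<Longrightarrow> [:0, 1:] ^ n i dvd f i"
  shows "coeff (\<Prod>i\<in>S. f i) (\<Sum>i\<in>S. n i) = (\<Prod>i\<in>S. coeff (f i) (n i))"
  using assms
proof (induction S rule: infinite_finite_induct)
  case (insert x S)
  then show ?case
    by (simp add: coeff_mult_X_pow_dvd X_pow_sum_dvd_prod)
qed simp_all

lemma det_X_pow_dvd:
  fixes M :: "'a::comm_ring_1 poly mat"
  assumes M: "M \<in> carrier_mat k k"
    and dvd: "\<And>s i. s < k \<Longrightarrow> i < k \<Longrightarrow> [:0, 1:] ^ e i dvd M $$ (s, i)"
  shows "[:0, 1:] ^ (\<Sum>i\<in>{0..<k}. e i) dvd det M"
  unfolding det_def'[OF M]
proof (intro dvd_sum dvd_mult)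
  fix p assume "p \<in> {p. p permutes {0..<k}}"
  then have p: "p permutes {0..<k}" by simp
  have "[:0, 1:] ^ (\<Sum>s\<in>{0..<k}. e (p s)) dvd (\<Prod>s\<in>{0..<k}. M $$ (s, p s))"
    using dvd p by (intro X_pow_sum_dvd_prod) (auto simp: permutes_in_image)
  then show "[:0, 1:] ^ (\<Sum>i\<in>{0..<k}. e i) dvd (\<Prod>s\<in>{0..<k}. M $$ (s, p s))"
    using sum.permute[OF p, of e] by (simp add: comp_def)
qed

lemma coeff_det_X_pow_dvd:
  fixes M :: "'a::comm_ring_1 poly mat"
  assumes M: "M \<in> carrier_mat k k"
    and dvd: "\<And>s i. s < k \<Longrightarrow> i < k \<Longrightarrow> [:0, 1:] ^ e i dvd M $$ (s, i)"
  shows "coeff (det M) (\<Sum>i\<in>{0..<k}. e i) = det (mat k k (\<lambda>(s, i). coeff (M $$ (s, i)) (e i)))"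
proof -
  have coeff_term: "coeff (\<Prod>s\<in>{0..<k}. M $$ (s, p s)) (\<Sum>i\<in>{0..<k}. e i) =
      (\<Prod>s\<in>{0..<k}. coeff (M $$ (s, p s)) (e (p s)))" if p: "p permutes {0..<k}" for p
  proof -
    have "\<And>s. s \<in> {0..<k} \<Longrightarrow> [:0, 1:] ^ e (p s) dvd M $$ (s, p s)"
      using dvd p by (auto simp: permutes_in_image)
    from coeff_prod_X_pow_dvd[where S="{0..<k}" and f="\<lambda>s. M $$ (s, p s)" and n="\<lambda>s. e (p s)", OF this]
    show ?thesis
      using sum.permute[OF p, of e] by (simp add: comp_def)
  qed
  have coeff_of_int_mult: "coeff (of_int i * q) n = of_int i * coeff q n" for i q n
    by (simp add: of_int_poly)
  show ?thesis
    unfolding det_def'[OF M] det_def'[OF mat_carrier] coeff_sum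
    by (intro sum.cong refl)
      (auto simp: coeff_of_int_mult coeff_term permutes_in_image intro!: prod.cong)
qed

lemma det_mat_scale_cols:
  fixes a :: "nat \<Rightarrow> nat \<Rightarrow> 'a::comm_ring_1"
  shows "det (mat k k (\<lambda>(s, i). a s i * c i)) = det (mat k k (\<lambda>(s, i). a s i)) * (\<Prod>i\<in>{0..<k}. c i)"
proof -
  have "(\<Prod>s\<in>{0..<k}. mat k k (\<lambda>(s, i). a s i * c i) $$ (s, p s)) =
      (\<Prod>s\<in>{0..<k}. mat k k (\<lambda>(s, i). a s i) $$ (s, p s)) * (\<Prod>i\<in>{0..<k}. c i)"
    if p: "p permutes {0..<k}" for p
  proof -
    have "(\<Prod>s\<in>{0..<k}. mat k k (\<lambda>(s, i). a s i * c i) $$ (s, p s)) =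
        (\<Prod>s\<in>{0..<k}. a s (p s) * c (p s))"
      using p by (intro prod.cong) (auto simp: permutes_in_image)
    also have "\<dots> = (\<Prod>s\<in>{0..<k}. a s (p s)) * (\<Prod>i\<in>{0..<k}. c i)"
      using prod.permute[OF p, of c] by (simp add: prod.distrib comp_def)
    also have "(\<Prod>s\<in>{0..<k}. a s (p s)) = (\<Prod>s\<in>{0..<k}. mat k k (\<lambda>(s, i). a s i) $$ (s, p s))"
      using p by (intro prod.cong) (auto simp: permutes_in_image)
    finally show ?thesis .
  qed
  then show ?thesis
    unfolding det_def'[OF mat_carrier] sum_distrib_right
    by (intro sum.cong refl) (simp add: mult.assoc)
qed

lemma det_vandermonde_nonzero:
  fixes x :: "nat \<Rightarrow> 'a::field"
  assumes inj: "inj_on x {0..<k}"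
  shows "det (mat k k (\<lambda>(s, i). x i ^ s)) \<noteq> 0"
proof
  let ?V = "mat k k (\<lambda>(s, i). x i ^ s)"
  assume "det ?V = 0"
  then have "det (transpose_mat ?V) = 0" using det_transpose[of ?V k] by simp
  then obtain c where c: "c \<in> carrier_vec k" "c \<noteq> 0\<^sub>v k" "transpose_mat ?V *\<^sub>v c = 0\<^sub>v k"
    using det_0_iff_vec_prod_zero_field[of "transpose_mat ?V" k] by auto
  define p where "p = (\<Sum>s<k. monom (c $ s) s)"
  have coeff_p: "coeff p s = (if s < k then c $ s else 0)" for s
    by (simp add: p_def coeff_sum coeff_monom)
  have "p \<noteq> 0"
  proof
    assume "p = 0"
    have "c $ s = 0" if "s < k" for s
      using coeff_p[of s] \<open>p = 0\<close> that by simp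
    then have "c = 0\<^sub>v k" using c(1) by (intro eq_vecI) auto
    with c(2) show False ..
  qed
  then have "0 < k" by (cases k) (auto simp: p_def)
  have "poly p (x i) = 0" if i: "i < k" for i
  proof -
    have "(\<Sum>s\<in>{0..<k}. x i ^ s * c $ s) = (transpose_mat ?V *\<^sub>v c) $ i"
      using i c(1) by (simp add: scalar_prod_def)
    also have "\<dots> = 0" using c(3) i by simp
    finally show ?thesis
      by (simp add: p_def poly_sum poly_monom atLeast0LessThan mult.commute)
  qed
  then have "x ` {0..<k} \<subseteq> {y. poly p y = 0}" by auto
  then have "card (x ` {0..<k}) \<le> card {y. poly p y = 0}"
    by (rule card_mono[OF poly_roots_finite[OF \<open>p \<noteq> 0\<close>]])
  then have "k \<le> card {y. poly p y = 0}" by (simp add: card_image[OF inj])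
  also have "\<dots> \<le> degree p" by (rule card_poly_roots_bound[OF \<open>p \<noteq> 0\<close>])
  also have "degree p \<le> k - 1" by (rule degree_le) (auto simp: coeff_p)
  finally show False using \<open>0 < k\<close> by simp
qed

lemma degree_det_le_row_bounds:
  fixes M :: "'a::comm_ring_1 poly mat"
  assumes M: "M \<in> carrier_mat k k"
    and deg: "\<And>s i. s < k \<Longrightarrow> i < k \<Longrightarrow> degree (M $$ (s, i)) \<le> d s"
  shows "degree (det M) \<le> (\<Sum>s\<in>{0..<k}. d s)"
  unfolding det_def'[OF M]
proof (rule degree_sum_le)
  fix p assume "p \<in> {p. p permutes {0..<k}}"
  then have p: "p permutes {0..<k}" by simp
  have "degree (\<Prod>s\<in>{0..<k}. M $$ (s, p s)) \<le> (\<Sum>s\<in>{0..<k}. degree (M $$ (s, p s)))"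
    using degree_prod_sum_le[of "{0..<k}" "\<lambda>s. M $$ (s, p s)"] by (simp add: comp_def)
  also have "\<dots> \<le> (\<Sum>s\<in>{0..<k}. d s)"
    using deg p by (intro sum_mono) (auto simp: permutes_in_image)
  finally show "degree (signof p * (\<Prod>s\<in>{0..<k}. M $$ (s, p s))) \<le> (\<Sum>s\<in>{0..<k}. d s)"
    by (simp add: of_int_poly order.trans[OF degree_smult_le])
qed (simp add: finite_permutations)

lemma smult_sum_right: "smult a (\<Sum>x\<in>S. f x) = (\<Sum>x\<in>S. smult a (f x))"
  by (induction S rule: infinite_finite_induct) (simp_all add: smult_add_right)

definition lincomb :: "(nat \<Rightarrow> 'a::comm_ring_1 poly) \<Rightarrow> nat \<Rightarrow> (nat \<Rightarrow> 'a) \<Rightarrow> 'a poly" where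
  "lincomb f k c = (\<Sum>j\<in>{0..<k}. smult (c j) (f j))"

definition lin_indep :: "(nat \<Rightarrow> 'a::comm_ring_1 poly) \<Rightarrow> nat \<Rightarrow> bool" where
  "lin_indep f k \<longleftrightarrow> (\<forall>c. lincomb f k c = 0 \<longrightarrow> (\<forall>j<k. c j = 0))"

lemma lincomb_diff_smult:
  "lincomb f k (\<lambda>j. c j - a * d j) = lincomb f k c - smult a (lincomb f k d)"
  by (simp add: lincomb_def smult_diff_left sum_subtractf smult_sum_right)

lemma lincomb_nonzero: "lin_indep f k \<Longrightarrow> j < k \<Longrightarrow> c j \<noteq> 0 \<Longrightarrow> lincomb f k c \<noteq> 0"
  unfolding lin_indep_def by auto

lemma degree_lincomb_le: "degree (lincomb f k c) \<le> (\<Sum>j\<in>{0..<k}. degree (f j))"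
  unfolding lincomb_def
  by (intro degree_sum_le order.trans[OF degree_smult_le] member_le_sum) auto

lemma lincomb_unit: "i < k \<Longrightarrow> lincomb f k (\<lambda>j. if j = i then 1 else 0) = f i"
  by (simp add: lincomb_def if_distrib[of "\<lambda>x. smult x _"] cong: if_cong)

definition skip :: "nat \<Rightarrow> nat \<Rightarrow> nat" where
  "skip i j = (if j < i then j else Suc j)"

lemma lincomb_skip:
  assumes "i < Suc k" "a i = 0"
  shows "lincomb f (Suc k) a = lincomb (\<lambda>j. f (skip i j)) k (\<lambda>j. a (skip i j))"
proof -
  have "bij_betw (skip i) {0..<k} ({0..<Suc k} - {i})"
    by (rule bij_betw_byWitness[where f'="\<lambda>j. if j < i then j else j - 1"])
      (use assms(1) in \<open>auto simp: skip_def\<close>)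
  then have "lincomb (\<lambda>j. f (skip i j)) k (\<lambda>j. a (skip i j)) =
      (\<Sum>j\<in>{0..<Suc k} - {i}. smult (a j) (f j))"
    unfolding lincomb_def by (rule sum.reindex_bij_betw)
  also have "\<dots> = smult (a i) (f i) + (\<Sum>j\<in>{0..<Suc k} - {i}. smult (a j) (f j))"
    using assms by simp
  also have "\<dots> = lincomb f (Suc k) a"
    unfolding lincomb_def by (rule sum.remove[symmetric]) (use assms(1) in auto)
  finally show ?thesis ..
qed

lemma not_lin_indep_obtains_vanishing_coeff:
  fixes f :: "nat \<Rightarrow> 'a::field poly"
  assumes "\<not> lin_indep f k"
  obtains i a' where "i < k" "a' i = 0" "lincomb f k a' = lincomb f k a"
proof -
  obtain c i where c: "lincomb f k c = 0" "i < k" "c i \<noteq> 0"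
    using assms unfolding lin_indep_def by auto
  define a' where "a' j = a j - a i / c i * c j" for j
  have "lincomb f k a' = lincomb f k a"
    unfolding a'_def lincomb_diff_smult c(1) by simp
  moreover have "a' i = 0" using c(3) by (simp add: a'_def)
  ultimately show ?thesis using that c(2) by blast
qed

lemma lincomb_order_avoiding:
  fixes f :: "nat \<Rightarrow> 'a::field poly" and C :: "nat \<Rightarrow> nat \<Rightarrow> 'a"
  assumes ind: "lin_indep f k" and m: "m < k" and c: "c m \<noteq> 0"
    and rows: "\<And>i j. m < i \<Longrightarrow> i < k \<Longrightarrow> j \<le> m \<Longrightarrow> C i j = 0"
    and rows_nonzero: "\<And>i. m < i \<Longrightarrow> i < k \<Longrightarrow> lincomb f k (C i) \<noteq> 0"
  obtains c' where "\<And>j. j \<le> m \<Longrightarrow> c' j = c j"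
    and "order 0 (lincomb f k c) \<le> order 0 (lincomb f k c')"
    and "\<And>i. m < i \<Longrightarrow> i < k \<Longrightarrow> order 0 (lincomb f k c') \<noteq> order 0 (lincomb f k (C i))"
proof -
  let ?ord = "\<lambda>c. order 0 (lincomb f k c)"
  let ?P = "\<lambda>c'. \<forall>j\<le>m. c' j = c j"
  (* Take admissible coefficients of maximal order: if that order were the order of a row,
     cancelling the lowest coefficient against that row would raise it. *)
  have nonzero: "lincomb f k c' \<noteq> 0" if "?P c'" for c'
    using lincomb_nonzero[OF ind m, of c'] that c by simp
  have "?ord c' < Suc (\<Sum>j\<in>{0..<k}. degree (f j))" if "?P c'" for c'
    using order_degree[OF nonzero[OF that], of 0] degree_lincomb_le[of f k c'] by simp
  then obtain c' where P: "?P c'" and max: "\<And>c''. ?P c'' \<Longrightarrow> ?ord c'' \<le> ?ord c'"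
    using ex_has_greatest_nat[of ?P c ?ord] by blast
  show ?thesis
  proof (rule that[of c'])
    show "c' j = c j" if "j \<le> m" for j using P that by simp
    show "?ord c \<le> ?ord c'" by (rule max) simp
    fix i assume i: "m < i" "i < k"
    show "?ord c' \<noteq> ?ord (C i)"
    proof
      assume eq: "?ord c' = ?ord (C i)"
      define e where "e = ?ord c'"
      define c'' where "c'' = (\<lambda>j. c' j - coeff (lincomb f k c') e / coeff (lincomb f k (C i)) e * C i j)"
      have "?P c''" using P rows i by (simp add: c''_def)
      have "[:0, 1:] ^ Suc e dvd lincomb f k c''"
        unfolding c''_def lincomb_diff_smult
      proof (rule X_pow_Suc_dvd_diff_smult)
        show "[:0, 1:] ^ e dvd lincomb f k c'" using order_1[of 0] by (simp add: e_def)
        show "[:0, 1:] ^ e dvd lincomb f k (C i)" using order_1[of 0] by (simp add: e_def eq)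
        show "coeff (lincomb f k (C i)) e \<noteq> 0"
          using coeff_order_0_nonzero[OF rows_nonzero[OF i]] by (simp add: e_def eq)
      qed
      then have "e < ?ord c''"
        using order_divides[of 0 "Suc e" "lincomb f k c''"] nonzero[OF \<open>?P c''\<close>] by (simp del: power_Suc)
      with max[OF \<open>?P c''\<close>] show False by (simp add: e_def)
    qed
  qed
qed

lemma inj_on_fun_upd_insert:
  assumes "m \<notin> S" "inj_on (\<lambda>i. h (C i)) S" "h c \<notin> (\<lambda>i. h (C i)) ` S"
  shows "inj_on (\<lambda>i. h ((C(m := c)) i)) (insert m S)"
proof -
  have "(C(m := c)) i = C i" if "i \<in> S" for i using assms(1) that by auto
  then have "inj_on (\<lambda>i. h ((C(m := c)) i)) S \<and> h c \<notin> (\<lambda>i. h ((C(m := c)) i)) ` S"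
    using assms(2,3) by (simp cong: inj_on_cong image_cong)
  moreover have "S - {m} = S" using assms(1) by blast
  ultimately show ?thesis by simp
qed

lemma triangular_lincombs_distinct_orders:
  fixes f :: "nat \<Rightarrow> 'a::field poly" and R :: "nat \<Rightarrow> nat \<Rightarrow> 'a"
  assumes ind: "lin_indep f k"
    and diag: "\<And>i. i < k \<Longrightarrow> R i i \<noteq> 0"
    and triangular: "\<And>i j. j < i \<Longrightarrow> i < k \<Longrightarrow> R i j = 0"
  obtains C where "\<And>i j. i < k \<Longrightarrow> j \<le> i \<Longrightarrow> C i j = R i j"
    and "\<And>i. i < k \<Longrightarrow> order 0 (lincomb f k (R i)) \<le> order 0 (lincomb f k (C i))"
    and "inj_on (\<lambda>i. order 0 (lincomb f k (C i))) {0..<k}"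
proof -
  let ?ord = "\<lambda>c. order 0 (lincomb f k c)"
  define settled where "settled m C \<longleftrightarrow>
    (\<forall>i\<in>{m..<k}. (\<forall>j\<le>i. C i j = R i j) \<and> ?ord (R i) \<le> ?ord (C i)) \<and>
    inj_on (\<lambda>i. ?ord (C i)) {m..<k}" for m C
  have "\<exists>C. settled m C" if "m \<le> k" for m
    using that
  proof (induction m rule: inc_induct)
    case base
    show ?case by (auto simp: settled_def)
  next
    case (step m)
    then obtain C where C: "settled (Suc m) C" by blast
    have rows: "C i j = 0" if "m < i" "i < k" "j \<le> m" for i j
      using C that triangular[of j i] by (auto simp: settled_def)
    have rows_nonzero: "lincomb f k (C i) \<noteq> 0" if "m < i" "i < k" for i
      using lincomb_nonzero[OF ind \<open>i < k\<close>, of "C i"] C that diag[of i] by (auto simp: settled_def)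
    obtain c where c: "\<And>j. j \<le> m \<Longrightarrow> c j = R m j" "?ord (R m) \<le> ?ord c"
      and avoid: "\<And>i. m < i \<Longrightarrow> i < k \<Longrightarrow> ?ord c \<noteq> ?ord (C i)"
      using lincomb_order_avoiding[where c="R m" and C=C and f=f and k=k and m=m,
          OF ind \<open>m < k\<close> diag[OF \<open>m < k\<close>] rows rows_nonzero]
      by blast
    have split: "{m..<k} = insert m {Suc m..<k}" using \<open>m < k\<close> by auto
    have "inj_on (\<lambda>i. ?ord ((C(m := c)) i)) {m..<k}"
      unfolding split
    proof (rule inj_on_fun_upd_insert[where h="\<lambda>c. order 0 (lincomb f k c)"])
      show "inj_on (\<lambda>i. ?ord (C i)) {Suc m..<k}" using C by (simp add: settled_def)
      show "?ord c \<notin> (\<lambda>i. ?ord (C i)) ` {Suc m..<k}"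
      proof
        assume "?ord c \<in> (\<lambda>i. ?ord (C i)) ` {Suc m..<k}"
        then obtain i where "Suc m \<le> i" "i < k" "?ord c = ?ord (C i)" by auto
        with avoid[of i] show False by simp
      qed
    qed simp
    then have "settled m (C(m := c))"
      using C c unfolding settled_def split by auto
    then show ?case by blast
  qed
  then obtain C where "settled 0 C" by blast
  then show ?thesis by (intro that[of C]) (auto simp: settled_def)
qed

definition wronskian :: "('a::comm_ring_1 poly \<Rightarrow> 'a poly) \<Rightarrow> nat \<Rightarrow> (nat \<Rightarrow> 'a poly) \<Rightarrow> 'a poly" where
  "wronskian D k g = det (mat k k (\<lambda>(s, i). (D ^^ s) (g i)))"

lemma linear_op_lincomb:
  assumes add: "\<And>p q. D (p + q) = D p + D q"
    and smult: "\<And>a p. D (smult a p) = smult a (D p)"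
  shows "D (lincomb f k c) = lincomb (\<lambda>j. D (f j)) k c"
proof -
  have "D 0 = 0" using smult[of 0 0] by simp
  have "D (\<Sum>j\<in>S. smult (c j) (f j)) = (\<Sum>j\<in>S. smult (c j) (D (f j)))" for S :: "nat set"
    by (induction S rule: infinite_finite_induct) (simp_all add: \<open>D 0 = 0\<close> add smult)
  then show ?thesis by (simp add: lincomb_def)
qed

lemma wronskian_lincomb:
  assumes add: "\<And>p q. D (p + q) = D p + D q"
    and smult: "\<And>a p. D (smult a p) = smult a (D p)"
  shows "wronskian D k (\<lambda>i. lincomb f k (C i)) = wronskian D k f * det (mat k k (\<lambda>(j, i). [:C i j:]))"
proof -
  have "(D ^^ s) (lincomb f k c) = lincomb (\<lambda>j. (D ^^ s) (f j)) k c" for s c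
    by (induction s) (simp_all add: linear_op_lincomb[OF add smult])
  then have funpow: "(D ^^ s) (\<Sum>j\<in>{0..<k}. smult (c j) (f j)) = (\<Sum>j\<in>{0..<k}. smult (c j) ((D ^^ s) (f j)))"
    for s c
    by (simp add: lincomb_def)
  have "mat k k (\<lambda>(s, i). (D ^^ s) (lincomb f k (C i))) =
      mat k k (\<lambda>(s, i). (D ^^ s) (f i)) * mat k k (\<lambda>(j, i). [:C i j:])"
    by (rule eq_matI)
      (simp_all add: funpow lincomb_def scalar_prod_def)
  then show ?thesis by (simp add: wronskian_def det_mult[of _ k])
qed

definition euler_deriv :: "'a::idom poly \<Rightarrow> 'a poly" where
  "euler_deriv p = [:0, 1:] * pderiv p"

lemma euler_deriv_add: "euler_deriv (p + q) = euler_deriv p + euler_deriv q"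
  by (simp add: euler_deriv_def pderiv_add algebra_simps)

lemma euler_deriv_smult: "euler_deriv (smult a p) = smult a (euler_deriv p)"
  by (simp add: euler_deriv_def pderiv_smult)

lemma euler_deriv_mult: "euler_deriv (p * q) = euler_deriv p * q + p * euler_deriv q"
  by (simp add: euler_deriv_def pderiv_mult algebra_simps)

lemma mult_euler_deriv_power: "p * euler_deriv (p ^ n) = of_nat n * p ^ n * euler_deriv p"
proof (cases n)
  case (Suc m)
  then show ?thesis
    by (simp add: euler_deriv_def pderiv_power_Suc of_nat_poly algebra_simps del: power_Suc)
       (simp add: power_Suc algebra_simps)
qed (simp add: euler_deriv_def)

lemma euler_deriv_X_pow: "euler_deriv ([:0, 1:] ^ n) = of_nat n * [:0, 1:] ^ n"
proof (cases n)
  case (Suc m)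
  have "euler_deriv ([:0, 1:] ^ n) = [:0, 1:] * monom (of_nat n) m"
    unfolding euler_deriv_def X_pow_eq_monom pderiv_monom using Suc by simp
  also have "\<dots> = monom 1 1 * monom (of_nat n) m"
    by (simp add: monom_altdef)
  also have "\<dots> = of_nat n * [:0, 1:] ^ n"
    by (simp add: mult_monom X_pow_eq_monom of_nat_poly smult_monom Suc monom_Suc)
  finally show ?thesis .
qed (simp add: euler_deriv_def)

lemma coeff_euler_deriv_0: "coeff (euler_deriv p) 0 = 0"
  by (simp add: euler_deriv_def)

lemma degree_euler_deriv_le: "degree (euler_deriv p) \<le> degree (p :: 'a::{idom, semiring_char_0} poly)"
proof (cases "degree p = 0")
  case True
  then show ?thesis by (simp add: euler_deriv_def pderiv_eq_0_iff)
next
  case False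
  have "degree (euler_deriv p) \<le> 1 + degree (pderiv p)"
    unfolding euler_deriv_def using degree_mult_le[of "[:0, 1:]" "pderiv p"] by simp
  then show ?thesis using False by (simp add: degree_pderiv)
qed

lemma sum_atLeast0LessThan_eq_choose_two: "(\<Sum>s\<in>{0..<k}. s) = k choose 2"
proof (induction k)
  case (Suc k)
  have "Suc k choose 2 = (k choose 2) + k"
    using binomial_Suc_Suc[of k 1] by (simp add: numeral_2_eq_2)
  then show ?case using Suc by simp
qed simp

(* The derivation D = A B X d/dX maps every X^a A^b B^c to itself times a polynomial of degree
   at most deg A + deg B, and on the lowest coefficient of a polynomial of order e it acts as
   multiplication by e A(0) B(0). *)
locale euler_setting =
  fixes A B :: "'a::field_char_0 poly"
  assumes poly_A_0: "poly A 0 \<noteq> 0" and poly_B_0: "poly B 0 \<noteq> 0"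
begin

definition euler_op :: "'a poly \<Rightarrow> 'a poly" where
  "euler_op p = A * B * euler_deriv p"

definition xab_term :: "nat \<Rightarrow> nat \<Rightarrow> nat \<Rightarrow> 'a poly" where
  "xab_term a b c = [:0, 1:] ^ a * A ^ b * B ^ c"

definition log_factor :: "nat \<Rightarrow> nat \<Rightarrow> nat \<Rightarrow> 'a poly" where
  "log_factor a b c =
    of_nat a * (A * B) + of_nat b * (euler_deriv A * B) + of_nat c * (A * euler_deriv B)"

lemma euler_op_add: "euler_op (p + q) = euler_op p + euler_op q"
  by (simp add: euler_op_def euler_deriv_add algebra_simps)

lemma euler_op_smult: "euler_op (smult a p) = smult a (euler_op p)"
  by (simp add: euler_op_def euler_deriv_smult)

lemma euler_op_xab_term_mult:
  "euler_op (xab_term a b c * q) = xab_term a b c * (log_factor a b c * q + euler_op q)"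
proof -
  have "A * B * euler_deriv (xab_term a b c) =
      A * B * euler_deriv ([:0, 1:] ^ a) * A ^ b * B ^ c
      + [:0, 1:] ^ a * B * B ^ c * (A * euler_deriv (A ^ b))
      + [:0, 1:] ^ a * A * A ^ b * (B * euler_deriv (B ^ c))"
    by (simp add: xab_term_def euler_deriv_mult algebra_simps)
  also have "\<dots> = A * B * (of_nat a * [:0, 1:] ^ a) * A ^ b * B ^ c
      + [:0, 1:] ^ a * B * B ^ c * (of_nat b * A ^ b * euler_deriv A)
      + [:0, 1:] ^ a * A * A ^ b * (of_nat c * B ^ c * euler_deriv B)"
    by (simp only: euler_deriv_X_pow mult_euler_deriv_power)
  also have "\<dots> = xab_term a b c * log_factor a b c"
    by (simp add: xab_term_def log_factor_def algebra_simps)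
  finally have "A * B * euler_deriv (xab_term a b c) = xab_term a b c * log_factor a b c" .
  then show ?thesis
    by (simp add: euler_op_def euler_deriv_mult algebra_simps)
qed

primrec cofactor :: "nat \<Rightarrow> nat \<Rightarrow> nat \<Rightarrow> nat \<Rightarrow> 'a poly" where
  "cofactor a b c 0 = 1"
| "cofactor a b c (Suc s) = log_factor a b c * cofactor a b c s + euler_op (cofactor a b c s)"

lemma funpow_euler_op_xab_term: "(euler_op ^^ s) (xab_term a b c) = xab_term a b c * cofactor a b c s"
  by (induction s) (simp_all add: euler_op_xab_term_mult)

lemma degree_log_factor_le: "degree (log_factor a b c) \<le> degree A + degree B"
proof -
  have of_nat_mult: "degree (of_nat n * p) \<le> degree p" for n and p :: "'a poly"
    by (simp add: of_nat_poly degree_smult_le)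
  have "degree (euler_deriv A * B) \<le> degree A + degree B"
    by (rule order.trans[OF degree_mult_le]) (simp add: degree_euler_deriv_le)
  moreover have "degree (A * euler_deriv B) \<le> degree A + degree B"
    by (rule order.trans[OF degree_mult_le]) (simp add: degree_euler_deriv_le)
  ultimately show ?thesis
    unfolding log_factor_def
    by (intro degree_add_le order.trans[OF of_nat_mult] degree_mult_le)
qed

lemma degree_euler_op_le: "degree (euler_op p) \<le> degree p + (degree A + degree B)"
  unfolding euler_op_def
  using degree_mult_le[of "A * B" "euler_deriv p"] degree_mult_le[of A B] degree_euler_deriv_le[of p]
  by linarith

lemma degree_cofactor_le: "degree (cofactor a b c s) \<le> (degree A + degree B) * s"
proof (induction s)
  case (Suc s)
  have "degree (log_factor a b c * cofactor a b c s) \<le> (degree A + degree B) * Suc s"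
    using degree_mult_le[of "log_factor a b c"] degree_log_factor_le[of a b c] Suc
    by (simp add: order.trans[OF degree_mult_le])
  moreover have "degree (euler_op (cofactor a b c s)) \<le> (degree A + degree B) * Suc s"
    using degree_euler_op_le[of "cofactor a b c s"] Suc by simp
  ultimately show ?case by (simp add: degree_add_le)
qed simp

lemma xab_term_nonzero: "xab_term a b c \<noteq> 0"
  using poly_A_0 poly_B_0 by (auto simp: xab_term_def)

lemma order_xab_term: "order 0 (xab_term a b c) = a"
proof -
  have "poly (A ^ b * B ^ c) 0 \<noteq> 0" using poly_A_0 poly_B_0 by simp
  then have "order 0 (A ^ b * B ^ c) = 0" by (rule order_0I)
  moreover have "xab_term a b c = [:0, 1:] ^ a * (A ^ b * B ^ c)"
    by (simp add: xab_term_def mult.assoc)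
  ultimately show ?thesis
    using xab_term_nonzero[of a b c] order_power_n_n[of 0 a] by (simp add: order_mult)
qed

lemma euler_op_X_pow_mult:
  "euler_op ([:0, 1:] ^ e * r) = [:0, 1:] ^ e * (log_factor e 0 0 * r + euler_op r)"
  using euler_op_xab_term_mult[of e 0 0 r] by (simp add: xab_term_def)

lemma X_pow_dvd_funpow_euler_op: "[:0, 1:] ^ e dvd p \<Longrightarrow> [:0, 1:] ^ e dvd (euler_op ^^ s) p"
proof (induction s)
  case (Suc s)
  then obtain r where "(euler_op ^^ s) p = [:0, 1:] ^ e * r" by (auto elim: dvdE)
  then show ?case by (simp add: euler_op_X_pow_mult)
qed simp

lemma coeff_euler_op_X_pow_dvd:
  assumes "[:0, 1:] ^ e dvd p"
  shows "coeff (euler_op p) e = of_nat e * poly (A * B) 0 * coeff p e"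
proof -
  obtain r where p: "p = [:0, 1:] ^ e * r" using assms by (auto elim: dvdE)
  have "coeff (euler_op r) 0 = 0" by (simp add: euler_op_def coeff_mult_0 coeff_euler_deriv_0)
  moreover have "coeff (log_factor e 0 0) 0 = of_nat e * poly (A * B) 0"
    by (simp add: log_factor_def of_nat_poly poly_0_coeff_0)
  ultimately show ?thesis by (simp add: p euler_op_X_pow_mult coeff_X_pow_mult coeff_mult_0)
qed

lemma coeff_funpow_euler_op_X_pow_dvd:
  "[:0, 1:] ^ e dvd p \<Longrightarrow> coeff ((euler_op ^^ s) p) e = (of_nat e * poly (A * B) 0) ^ s * coeff p e"
  by (induction s) (simp_all add: coeff_euler_op_X_pow_dvd X_pow_dvd_funpow_euler_op)

lemma wronskian_xab_terms:
  "wronskian euler_op k (\<lambda>j. xab_term (\<alpha> j) (\<beta> j) (\<gamma> j)) =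
    det (mat k k (\<lambda>(s, j). cofactor (\<alpha> j) (\<beta> j) (\<gamma> j) s)) * (\<Prod>j\<in>{0..<k}. xab_term (\<alpha> j) (\<beta> j) (\<gamma> j))"
  using det_mat_scale_cols[where a="\<lambda>s j. cofactor (\<alpha> j) (\<beta> j) (\<gamma> j) s"
      and c="\<lambda>j. xab_term (\<alpha> j) (\<beta> j) (\<gamma> j)" and k=k]
  by (simp add: wronskian_def funpow_euler_op_xab_term mult.commute)

lemma order_wronskian_xab_terms_le:
  assumes nonzero: "wronskian euler_op k (\<lambda>j. xab_term (\<alpha> j) (\<beta> j) (\<gamma> j)) \<noteq> 0"
  shows "order 0 (wronskian euler_op k (\<lambda>j. xab_term (\<alpha> j) (\<beta> j) (\<gamma> j)))
    \<le> (\<Sum>j\<in>{0..<k}. \<alpha> j) + (degree A + degree B) * (k choose 2)"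
proof -
  let ?Q = "det (mat k k (\<lambda>(s, j). cofactor (\<alpha> j) (\<beta> j) (\<gamma> j) s))"
  let ?T = "\<Prod>j\<in>{0..<k}. xab_term (\<alpha> j) (\<beta> j) (\<gamma> j)"
  have "?Q \<noteq> 0" using nonzero by (simp add: wronskian_xab_terms)
  have "order 0 ?Q \<le> degree ?Q" by (rule order_degree[OF \<open>?Q \<noteq> 0\<close>])
  also have "\<dots> \<le> (\<Sum>s\<in>{0..<k}. (degree A + degree B) * s)"
    by (rule degree_det_le_row_bounds) (simp_all add: degree_cofactor_le)
  also have "\<dots> = (degree A + degree B) * (k choose 2)"
    by (simp add: sum_distrib_left[symmetric] sum_atLeast0LessThan_eq_choose_two)
  finally have Q: "order 0 ?Q \<le> (degree A + degree B) * (k choose 2)" .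
  have "?T \<noteq> 0" by (simp add: xab_term_nonzero)
  moreover have "order 0 ?T = (\<Sum>j\<in>{0..<k}. \<alpha> j)"
    by (simp add: order_prod xab_term_nonzero order_xab_term)
  ultimately show ?thesis
    using Q \<open>?Q \<noteq> 0\<close> by (simp add: wronskian_xab_terms order_mult)
qed

lemma wronskian_distinct_orders:
  assumes nonzero: "\<And>i. i < k \<Longrightarrow> g i \<noteq> 0"
    and inj: "inj_on (\<lambda>i. order 0 (g i)) {0..<k}"
  shows "wronskian euler_op k g \<noteq> 0"
    and "(\<Sum>i\<in>{0..<k}. order 0 (g i)) \<le> order 0 (wronskian euler_op k g)"
proof -
  define e where "e i = order 0 (g i)" for i
  (* The nodes of the Vandermonde determinant below; distinct because the characteristic is 0. *)
  define x where "x i = of_nat (e i) * poly (A * B) 0" for i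
  let ?M = "mat k k (\<lambda>(s, i). (euler_op ^^ s) (g i))"
  have dvd: "[:0, 1:] ^ e i dvd ?M $$ (s, i)" if "s < k" "i < k" for s i
    using that order_1[of 0 "g i"] by (simp add: e_def X_pow_dvd_funpow_euler_op)
  have "inj_on x {0..<k}"
  proof (rule inj_onI)
    fix i j assume ij: "i \<in> {0..<k}" "j \<in> {0..<k}" "x i = x j"
    then have "e i = e j" using poly_A_0 poly_B_0 by (simp add: x_def)
    with inj ij show "i = j" by (auto simp: e_def dest: inj_onD)
  qed
  have coeffs: "mat k k (\<lambda>(s, i). coeff (?M $$ (s, i)) (e i)) = mat k k (\<lambda>(s, i). x i ^ s * coeff (g i) (e i))"
    using order_1[of 0 "g _"]
    by (intro eq_matI) (simp_all add: e_def x_def coeff_funpow_euler_op_X_pow_dvd)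
  have "coeff (wronskian euler_op k g) (\<Sum>i\<in>{0..<k}. e i) =
      det (mat k k (\<lambda>(s, i). coeff (?M $$ (s, i)) (e i)))"
    unfolding wronskian_def by (rule coeff_det_X_pow_dvd[OF mat_carrier dvd])
  also have "\<dots> = det (mat k k (\<lambda>(s, i). x i ^ s * coeff (g i) (e i)))"
    by (simp only: coeffs)
  also have "\<dots> = det (mat k k (\<lambda>(s, i). x i ^ s)) * (\<Prod>i\<in>{0..<k}. coeff (g i) (e i))"
    by (rule det_mat_scale_cols)
  also have "\<dots> \<noteq> 0"
    using det_vandermonde_nonzero[OF \<open>inj_on x {0..<k}\<close>] coeff_order_0_nonzero[OF nonzero]
    by (simp add: e_def)
  finally have coeff: "coeff (wronskian euler_op k g) (\<Sum>i\<in>{0..<k}. e i) \<noteq> 0" .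
  then show "wronskian euler_op k g \<noteq> 0" by auto
  moreover have "[:0, 1:] ^ (\<Sum>i\<in>{0..<k}. e i) dvd wronskian euler_op k g"
    unfolding wronskian_def by (rule det_X_pow_dvd[OF mat_carrier dvd])
  ultimately show "(\<Sum>i\<in>{0..<k}. order 0 (g i)) \<le> order 0 (wronskian euler_op k g)"
    using order_divides[of 0 "\<Sum>i\<in>{0..<k}. e i" "wronskian euler_op k g"] by (simp add: e_def)
qed

lemma sum_orders_triangular_lincombs_le:
  fixes \<alpha> \<beta> \<gamma> :: "nat \<Rightarrow> nat" and C :: "nat \<Rightarrow> nat \<Rightarrow> 'a"
  defines "F \<equiv> \<lambda>j. xab_term (\<alpha> j) (\<beta> j) (\<gamma> j)"
  assumes diag: "\<And>i. i < k \<Longrightarrow> C i i \<noteq> 0"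
    and triangular: "\<And>i j. j < i \<Longrightarrow> i < k \<Longrightarrow> C i j = 0"
    and nonzero: "\<And>i. i < k \<Longrightarrow> lincomb F k (C i) \<noteq> 0"
    and inj: "inj_on (\<lambda>i. order 0 (lincomb F k (C i))) {0..<k}"
  shows "(\<Sum>i\<in>{0..<k}. order 0 (lincomb F k (C i)))
    \<le> (\<Sum>j\<in>{0..<k}. \<alpha> j) + (degree A + degree B) * (k choose 2)"
proof -
  let ?C = "mat k k (\<lambda>(j, i). [:C i j:])"
  let ?W = "wronskian euler_op k (\<lambda>i. lincomb F k (C i))"
  have W: "?W = wronskian euler_op k F * det ?C"
    by (rule wronskian_lincomb) (simp_all add: euler_op_add euler_op_smult)
  have "det ?C = prod_list (diag_mat ?C)"
    by (rule det_lower_triangular[where n=k]) (simp_all add: triangular)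
  moreover have "0 \<notin> set (diag_mat ?C)" using diag by (auto simp: diag_mat_def)
  ultimately have "det ?C \<noteq> 0" by (simp add: prod_list_zero_iff)
  moreover have "degree (det ?C) = 0" using degree_det_le[of k ?C 0] by simp
  ultimately have order_C: "order 0 (det ?C) = 0" using order_degree[of "det ?C" 0] by simp
  have "?W \<noteq> 0" by (rule wronskian_distinct_orders(1)[OF nonzero inj])
  have "(\<Sum>i\<in>{0..<k}. order 0 (lincomb F k (C i))) \<le> order 0 ?W"
    by (rule wronskian_distinct_orders(2)[OF nonzero inj])
  also have "\<dots> = order 0 (wronskian euler_op k F)"
    using \<open>?W \<noteq> 0\<close> order_C by (simp add: W order_mult)
  also have "\<dots> \<le> (\<Sum>j\<in>{0..<k}. \<alpha> j) + (degree A + degree B) * (k choose 2)"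
    unfolding F_def by (rule order_wronskian_xab_terms_le) (use \<open>?W \<noteq> 0\<close> W in \<open>simp add: F_def\<close>)
  finally show ?thesis .
qed

lemma order_lincomb_xab_terms_le_lin_indep:
  fixes \<alpha> \<beta> \<gamma> :: "nat \<Rightarrow> nat"
  defines "F \<equiv> \<lambda>j. xab_term (\<alpha> j) (\<beta> j) (\<gamma> j)"
  assumes ind: "lin_indep F k" and k: "0 < k" and a_0: "a 0 \<noteq> 0"
  shows "order 0 (lincomb F k a) \<le> \<alpha> 0 + (degree A + degree B) * (k choose 2)"
proof -
  define R where "R i = (if i = 0 then a else (\<lambda>j. if j = i then 1 else 0))" for i
  obtain C where C_R: "\<And>i j. i < k \<Longrightarrow> j \<le> i \<Longrightarrow> C i j = R i j"
    and C_order: "\<And>i. i < k \<Longrightarrow> order 0 (lincomb F k (R i)) \<le> order 0 (lincomb F k (C i))"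
    and inj: "inj_on (\<lambda>i. order 0 (lincomb F k (C i))) {0..<k}"
    by (rule triangular_lincombs_distinct_orders[OF ind, of R]) (use a_0 in \<open>auto simp: R_def\<close>)
  have "(\<Sum>i\<in>{0..<k}. order 0 (lincomb F k (C i)))
      \<le> (\<Sum>j\<in>{0..<k}. \<alpha> j) + (degree A + degree B) * (k choose 2)"
    unfolding F_def
  proof (rule sum_orders_triangular_lincombs_le)
    show "C i i \<noteq> 0" if "i < k" for i using C_R[OF that] a_0 by (simp add: R_def)
    show "C i j = 0" if "j < i" "i < k" for i j using C_R[of i j] that by (simp add: R_def)
    show "lincomb (\<lambda>j. xab_term (\<alpha> j) (\<beta> j) (\<gamma> j)) k (C i) \<noteq> 0" if "i < k" for i
      using lincomb_nonzero[OF ind that] C_R[OF that] a_0 by (simp add: R_def F_def)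
  qed (use inj in \<open>simp add: F_def\<close>)
  moreover have "\<alpha> i \<le> order 0 (lincomb F k (C i))" if "0 < i" "i < k" for i
    using C_order[OF that(2)] that by (simp add: R_def lincomb_unit F_def order_xab_term)
  then have "(\<Sum>i\<in>{Suc 0..<k}. \<alpha> i) \<le> (\<Sum>i\<in>{Suc 0..<k}. order 0 (lincomb F k (C i)))"
    by (intro sum_mono) simp
  moreover have "order 0 (lincomb F k a) \<le> order 0 (lincomb F k (C 0))"
    using C_order[OF k] by (simp add: R_def)
  ultimately show ?thesis
    using k by (simp add: sum.atLeast_Suc_lessThan)
qed

lemma order_lincomb_xab_terms_le:
  assumes "lincomb (\<lambda>j. xab_term (\<alpha> j) (\<beta> j) (\<gamma> j)) k a \<noteq> 0"
  shows "\<exists>j<k. order 0 (lincomb (\<lambda>j. xab_term (\<alpha> j) (\<beta> j) (\<gamma> j)) k a)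
    \<le> \<alpha> j + (degree A + degree B) * ((k - j) choose 2)"
  using assms
proof (induction k arbitrary: \<alpha> \<beta> \<gamma> a)
  case 0
  then show ?case by (simp add: lincomb_def)
next
  case (Suc k)
  define F where "F = (\<lambda>j. xab_term (\<alpha> j) (\<beta> j) (\<gamma> j))"
  define P where "P = lincomb F (Suc k) a"
  consider "lin_indep F (Suc k)" "a 0 \<noteq> 0"
    | i a' where "i < Suc k" "a' i = 0" "lincomb F (Suc k) a' = P"
    using not_lin_indep_obtains_vanishing_coeff[of F "Suc k" a] by (auto simp: P_def)
  then show ?case
  proof cases
    case 1
    then show ?thesis
      using order_lincomb_xab_terms_le_lin_indep[of \<alpha> \<beta> \<gamma> "Suc k" a] by (auto simp: F_def)
  next
    case (2 i a')
    have "P = lincomb (\<lambda>j. F (skip i j)) k (\<lambda>j. a' (skip i j))"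
      using 2 lincomb_skip[of i k a' F] by simp
    then obtain j where j: "j < k"
      "order 0 P \<le> \<alpha> (skip i j) + (degree A + degree B) * ((k - j) choose 2)"
      using Suc.IH[of "\<lambda>j. \<alpha> (skip i j)" "\<lambda>j. \<beta> (skip i j)" "\<lambda>j. \<gamma> (skip i j)"] Suc.prems
      by (auto simp: F_def P_def)
    have "k - j \<le> Suc k - skip i j" "skip i j < Suc k" using j(1) by (auto simp: skip_def)
    then have "order 0 P \<le> \<alpha> (skip i j) + (degree A + degree B) * ((Suc k - skip i j) choose 2)"
      using j(2) binomial_right_mono[of "k - j" "Suc k - skip i j" 2]
      by (meson add_left_mono mult_left_mono le_trans zero_le)
    with \<open>skip i j < Suc k\<close> show ?thesis by (auto simp: P_def F_def)
  qed
qed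

end

theorem corollary2p7:
  fixes u v t w :: "'a::field_char_0"
    and a :: "nat \<Rightarrow> 'a"
    and \<alpha> \<beta> \<gamma> :: "nat \<Rightarrow> nat"
    and l :: nat and P :: "'a poly"
  assumes wt: "w * t \<noteq> 0"
    and mono: "\<And>i j. 1 \<le> i \<Longrightarrow> i \<le> j \<Longrightarrow> j \<le> l \<Longrightarrow> \<alpha> i \<le> \<alpha> j"
    and P_def: "P = (\<Sum>j=1..l. smult (a j)
                     ([:0, 1:] ^ \<alpha> j * [:t, v:] ^ \<beta> j * [:w, u:] ^ \<gamma> j))"
    and nz: "P \<noteq> 0"
  shows "val P \<le> Max ((\<lambda>j. \<alpha> j + 2 * ((l + 1 - j) choose 2)) ` {1..l})"
proof -
  interpret euler_setting "[:t, v:]" "[:w, u:]"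
    using wt by unfold_locales simp_all
  have P_lincomb: "P = lincomb (\<lambda>j. xab_term (\<alpha> (Suc j)) (\<beta> (Suc j)) (\<gamma> (Suc j))) l (\<lambda>j. a (Suc j))"
    unfolding P_def lincomb_def xab_term_def
    by (simp add: sum.atLeast1_atMost_eq atLeast0LessThan)
  obtain j where j: "j < l"
    "order 0 P \<le> \<alpha> (Suc j) + (degree [:t, v:] + degree [:w, u:]) * ((l - j) choose 2)"
    using order_lincomb_xab_terms_le[of "\<lambda>j. \<alpha> (Suc j)" "\<lambda>j. \<beta> (Suc j)" "\<lambda>j. \<gamma> (Suc j)" l
        "\<lambda>j. a (Suc j)", folded P_lincomb, OF nz]
    by blast
  have "degree [:t, v:] + degree [:w, u:] \<le> 2" by simp
  then have "(degree [:t, v:] + degree [:w, u:]) * ((l - j) choose 2) \<le> 2 * ((l - j) choose 2)"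
    by (rule mult_right_mono) simp
  with j(2) have "order 0 P \<le> \<alpha> (Suc j) + 2 * ((l - j) choose 2)" by linarith
  then have "val P \<le> \<alpha> (Suc j) + 2 * ((l + 1 - Suc j) choose 2)"
    using val_eq_order[OF nz] by simp
  also have "\<dots> \<le> Max ((\<lambda>j. \<alpha> j + 2 * ((l + 1 - j) choose 2)) ` {1..l})"
    by (rule Max_ge) (use j(1) in \<open>auto intro!: image_eqI[where x="Suc j"]\<close>)
  finally show ?thesis .
qed

end
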